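(* Let $k$ be a field and let $G$ be an infinite group. Then for every integer $n \geq 1$ there exists a canonical ring isomorphism $\mathrm{LNUCA}_{c}(G, k^n)\simeq M_n(D^1(k[G]))$.
   Context: Configurations and shift: for a set $A$ and a group $G$, $A^G$ is the set of maps $G\to A$; for $g\in G$, $x\in A^G$ set $(gx)(h)=x(g^{-1}h)$, so $(g^{-1}x)(h)=x(gh)$. For a subset $M\subset G$, a set $S$ of maps $A^M\to A$ and $s\in S^G$, the non-uniform cellular automaton (NUCA) $\sigma_s\colon A^G\to A^G$ is $\sigma_s(x)(g)=s(g)\big((g^{-1}x)\vert_M\big)$; $M$ is its memory. For a vector space $V$ over a field $k$, $\mathrm{LNUCA}_c(G,V)$ denotes the set of maps $\tau\colon V^G\to V^G$ such that $\tau=\sigma_s$ for some finite $M\subset G$ and some $s\in \mathcal{L}(V^M,V)^G$ ($k$-linear maps) for which there is a finite $E\subset G$ with $s(g)=s(h)$ for all $g,h\in G\setminus E$. It is a ring under pointwise addition and composition of maps. For a ring $R$ and group $G$, $R[G]$ is the group ring; $(R[G])[G]$ denotes the set of finitely supported maps $\beta\colon G\to R[G]$, written $g\mapsto\beta(g)$, with $\beta(g)(h)\in R$. The ring $D^1(R[G])$ is the set $R[G]\times (R[G])[G]$ with componentwise addition and multiplication $(\alpha_1,\beta_1)*(\alpha_2,\beta_2)=(\alpha_1\alpha_2,\ \alpha_1\beta_2+\beta_1\alpha_2+\beta_1\beta_2)$, where $\alpha_1\alpha_2$ is the group ring product and, for $\alpha\in R[G]$, $\beta,\gamma\in (R[G])[G]$,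 $g,h\in G$, the twisted products are $(\alpha\beta)(g)(h)=\sum_{t\in G}\alpha(t)\beta(gt)(t^{-1}h)$, $(\beta\alpha)(g)(h)=\sum_{t\in G}\beta(g)(t)\alpha(t^{-1}h)$, $(\beta\gamma)(g)(h)=\sum_{t\in G}\beta(g)(t)\gamma(gt)(t^{-1}h)$. $M_n(\cdot)$ denotes the ring of $n\times n$ matrices. *)

theory Defs
  imports Main "HOL-Library.Groups_Big_Fun" "HOL-Library.Product_Plus" "HOL-Library.Function_Algebras"
begin

text \<open>The group G is a type 'g of class group_add (written additively, NOT assumed
commutative): g^{-1} is -g, gh is g + h.
The space k^n is modelled as 'n => 'k for a finite index type 'n with CARD('n) = n.\<close>

text \<open>V^M is modelled as the maps y :: 'g => V that vanish outside M.
 lin_on M f: f is k-linear on V^M.\<close>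
definition lin_on :: "'g set \<Rightarrow> (('g \<Rightarrow> 'n \<Rightarrow> 'k::field) \<Rightarrow> ('n \<Rightarrow> 'k)) \<Rightarrow> bool" where
  "lin_on M f \<longleftrightarrow>
     (\<forall>x y. (\<forall>h. h \<notin> M \<longrightarrow> x h = 0) \<longrightarrow> (\<forall>h. h \<notin> M \<longrightarrow> y h = 0) \<longrightarrow>
        f (x + y) = f x + f y) \<and>
     (\<forall>c x. (\<forall>h. h \<notin> M \<longrightarrow> x h = 0) \<longrightarrow>
        f (\<lambda>h i. c * x h i) = (\<lambda>i. c * f x i))"

text \<open>sigma_s(x)(g) = s(g)((g^{-1} x)|_M), where (g^{-1}x)(h) = x(gh).\<close>
definition nuca :: "'g::group_add set \<Rightarrow> ('g \<Rightarrow> (('g \<Rightarrow> 'v::zero) \<Rightarrow> 'v))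
     \<Rightarrow> ('g \<Rightarrow> 'v) \<Rightarrow> ('g \<Rightarrow> 'v)" where
  "nuca M s x = (\<lambda>g. s g (\<lambda>h. if h \<in> M then x (g + h) else 0))"

definition LNUCA_c :: "(('g::group_add \<Rightarrow> 'n::finite \<Rightarrow> 'k::field) \<Rightarrow> ('g \<Rightarrow> 'n \<Rightarrow> 'k)) set" where
  "LNUCA_c = {\<tau>. \<exists>M s E. finite M \<and> (\<forall>g. lin_on M (s g)) \<and> finite E \<and>
        (\<forall>g h. g \<notin> E \<longrightarrow> h \<notin> E \<longrightarrow> s g = s h) \<and> \<tau> = nuca M s}"

text \<open>Ring operations on LNUCA_c: pointwise addition (the function-space (+)) and
  composition (o); unit id.\<close>

definition fin_supp :: "('a \<Rightarrow> 'b::zero) \<Rightarrow> bool" where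
  "fin_supp f \<longleftrightarrow> finite {a. f a \<noteq> 0}"

text \<open>k[G] as finitely supported maps; (k[G])[G] as finitely supported maps G => k[G].\<close>
definition groupring :: "('g \<Rightarrow> 'k::field) set" where
  "groupring = {\<alpha>. fin_supp \<alpha>}"

definition groupring2 :: "('g \<Rightarrow> 'g \<Rightarrow> 'k::field) set" where
  "groupring2 = {\<beta>. fin_supp \<beta> \<and> (\<forall>g. fin_supp (\<beta> g))}"

definition D1 :: "(('g \<Rightarrow> 'k::field) \<times> ('g \<Rightarrow> 'g \<Rightarrow> 'k)) set" where
  "D1 = groupring \<times> groupring2"

text \<open>Group ring product and the three twisted products (sums over G are finite
  sums over the support, via Sum_any).\<close>
definition gr_mul :: "('g::group_add \<Rightarrow> 'k::field) \<Rightarrow> ('g \<Rightarrow> 'k) \<Rightarrow> ('g \<Rightarrow> 'k)" where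
  "gr_mul a b = (\<lambda>h. \<Sum>t. a t * b (- t + h))"

definition tw_lr :: "('g::group_add \<Rightarrow> 'k::field) \<Rightarrow> ('g \<Rightarrow> 'g \<Rightarrow> 'k) \<Rightarrow> ('g \<Rightarrow> 'g \<Rightarrow> 'k)" where
  "tw_lr a b = (\<lambda>g h. \<Sum>t. a t * b (g + t) (- t + h))"

definition tw_rl :: "('g::group_add \<Rightarrow> 'g \<Rightarrow> 'k::field) \<Rightarrow> ('g \<Rightarrow> 'k) \<Rightarrow> ('g \<Rightarrow> 'g \<Rightarrow> 'k)" where
  "tw_rl b a = (\<lambda>g h. \<Sum>t. b g t * a (- t + h))"

definition tw_rr :: "('g::group_add \<Rightarrow> 'g \<Rightarrow> 'k::field) \<Rightarrow> ('g \<Rightarrow> 'g \<Rightarrow> 'k) \<Rightarrow> ('g \<Rightarrow> 'g \<Rightarrow> 'k)" where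
  "tw_rr b c = (\<lambda>g h. \<Sum>t. b g t * c (g + t) (- t + h))"

text \<open>Addition on D^1 is componentwise: the (+) of pairs from Product_Plus.\<close>
definition d1_mul :: "('g::group_add \<Rightarrow> 'k::field) \<times> ('g \<Rightarrow> 'g \<Rightarrow> 'k)
     \<Rightarrow> ('g \<Rightarrow> 'k) \<times> ('g \<Rightarrow> 'g \<Rightarrow> 'k) \<Rightarrow> ('g \<Rightarrow> 'k) \<times> ('g \<Rightarrow> 'g \<Rightarrow> 'k)" where
  "d1_mul x y = (case x of (a1, b1) \<Rightarrow> case y of (a2, b2) \<Rightarrow>
      (gr_mul a1 a2, tw_lr a1 b2 + tw_rl b1 a2 + tw_rr b1 b2))"

definition d1_one :: "('g::group_add \<Rightarrow> 'k::field) \<times> ('g \<Rightarrow> 'g \<Rightarrow> 'k)" where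
  "d1_one = ((\<lambda>g. if g = 0 then 1 else 0), 0)"

definition MatD1 :: "('n::finite \<Rightarrow> 'n \<Rightarrow> ('g::group_add \<Rightarrow> 'k::field) \<times> ('g \<Rightarrow> 'g \<Rightarrow> 'k)) set" where
  "MatD1 = {A. \<forall>i j. A i j \<in> D1}"

text \<open>Matrix addition is entrywise: the function-space (+).\<close>
definition mat_mul :: "('n::finite \<Rightarrow> 'n \<Rightarrow> ('g::group_add \<Rightarrow> 'k::field) \<times> ('g \<Rightarrow> 'g \<Rightarrow> 'k))
   \<Rightarrow> ('n \<Rightarrow> 'n \<Rightarrow> ('g \<Rightarrow> 'k) \<times> ('g \<Rightarrow> 'g \<Rightarrow> 'k)) \<Rightarrow> ('n \<Rightarrow> 'n \<Rightarrow> ('g \<Rightarrow> 'k) \<times> ('g \<Rightarrow> 'g \<Rightarrow> 'k))" where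
  "mat_mul A B = (\<lambda>i j. \<Sum>l\<in>UNIV. d1_mul (A i l) (B l j))"

definition mat_one :: "'n::finite \<Rightarrow> 'n \<Rightarrow> ('g::group_add \<Rightarrow> 'k::field) \<times> ('g \<Rightarrow> 'g \<Rightarrow> 'k)" where
  "mat_one = (\<lambda>i j. if i = j then d1_one else 0)"

end

theory Submission
  imports Defs "HOL-Library.Set_Algebras"
begin

(*
  A linear NUCA with finite memory is determined by its kernel: matrices c g h over k with
  (tau x) g = sum_h c g h * x (g + h). The kernel is finitely supported in h, does not depend
  on g outside a finite set of cells, and composition of automata becomes the twisted
  convolution (c * d) g h = sum_t c g t * d (g + t) (-t + h). As G is infinite, the value of
  c g at infinity is well defined, so c g h = alpha h + beta g h with beta finitely supported
  in g. Expanding the twisted convolution of two such splittings gives exactly the four terms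
  of the product in D^1(k[G]), entrywise in M_n.
*)

lemma sum_apply: "(\<Sum>a\<in>A. f a) x = (\<Sum>a\<in>A. f a x)"
  by (induction A rule: infinite_finite_induct) auto

lemma sum_swap_nested:
  "(\<Sum>a\<in>A. \<Sum>b\<in>B. \<Sum>c\<in>C. \<Sum>d\<in>D. f a b c d) = (\<Sum>c\<in>C. \<Sum>d\<in>D. \<Sum>a\<in>A. \<Sum>b\<in>B. f a b c d)"
  by (subst sum.swap, subst (2) sum.swap, simp only: sum.swap[of _ B])

lemma Sum_any_mult_eq_sum:
  assumes "finite S" and "\<And>t. t \<notin> S \<Longrightarrow> a t = 0"
  shows "(\<Sum>t. a t * b t) = (\<Sum>t\<in>S. a t * (b t :: 'a::semiring_0))"
proof (rule Sum_any.expand_superset[OF assms(1)])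
  show "{t. a t * b t \<noteq> 0} \<subseteq> S"
    using assms(2) by (metis (mono_tags, lifting) mem_Collect_eq mult_zero_left subsetI)
qed

lemma eventually_cofinite_translate:
  fixes t :: "'a::group_add"
  assumes "\<forall>\<^sub>\<infinity>x. P x"
  shows "\<forall>\<^sub>\<infinity>x. P (x + t)"
proof -
  have "finite ((\<lambda>x. x + t) -` {x. \<not> P x})"
    using assms by (intro finite_vimageI) (auto simp: eventually_cofinite inj_on_def)
  then show ?thesis
    by (simp add: eventually_cofinite vimage_def)
qed

lemma eventually_constant_iff_finite_exceptions:
  "(\<exists>v. \<forall>\<^sub>\<infinity>x. f x = v) \<longleftrightarrow> (\<exists>E. finite E \<and> (\<forall>x y. x \<notin> E \<longrightarrow> y \<notin> E \<longrightarrow> f x = f y))"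
proof
  assume "\<exists>v. \<forall>\<^sub>\<infinity>x. f x = v"
  then obtain v where "finite {x. f x \<noteq> v}"
    by (auto simp: eventually_cofinite)
  then show "\<exists>E. finite E \<and> (\<forall>x y. x \<notin> E \<longrightarrow> y \<notin> E \<longrightarrow> f x = f y)"
    by (intro exI[of _ "{x. f x \<noteq> v}"]) auto
next
  assume "\<exists>E. finite E \<and> (\<forall>x y. x \<notin> E \<longrightarrow> y \<notin> E \<longrightarrow> f x = f y)"
  then obtain E where E: "finite E" "\<And>x y. x \<notin> E \<Longrightarrow> y \<notin> E \<Longrightarrow> f x = f y"
    by blast
  show "\<exists>v. \<forall>\<^sub>\<infinity>x. f x = v"
  proof (cases "E = UNIV")
    case True
    then show ?thesis
      using E(1) by (auto simp: eventually_cofinite intro: rev_finite_subset)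
  next
    case False
    then obtain y where "y \<notin> E"
      by blast
    then have "{x. f x \<noteq> f y} \<subseteq> E"
      using E(2) by blast
    then show ?thesis
      using E(1) finite_subset by (auto simp: eventually_cofinite)
  qed
qed

(* Junk (an arbitrary THE-value) unless the type is infinite and f is eventually constant. *)
definition cofinite_value :: "('a \<Rightarrow> 'b) \<Rightarrow> 'b" where
  "cofinite_value f = (THE v. \<forall>\<^sub>\<infinity>x. f x = v)"

lemma cofinite_value_eq:
  assumes "infinite (UNIV :: 'a set)" and "\<forall>\<^sub>\<infinity>x. (f :: 'a \<Rightarrow> 'b) x = v"
  shows "cofinite_value f = v"
  unfolding cofinite_value_def
proof (rule the_equality)
  fix w
  assume w: "\<forall>\<^sub>\<infinity>x. f x = w"
  have "\<forall>\<^sub>\<infinity>x::'a. w = v"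
    by (rule eventually_mono[OF eventually_conj[OF assms(2) w]]) auto
  then show "w = v"
    using assms(1) by simp
qed (fact assms(2))

lemma eventually_eq_cofinite_value:
  assumes "infinite (UNIV :: 'a set)" and "\<exists>v. \<forall>\<^sub>\<infinity>x. (f :: 'a \<Rightarrow> 'b) x = v"
  shows "\<forall>\<^sub>\<infinity>x. f x = cofinite_value f"
  using assms cofinite_value_eq by metis

section \<open>Linear maps on finitely supported configurations\<close>

definition unit_config :: "'g \<Rightarrow> 'n \<Rightarrow> 'g \<Rightarrow> 'n \<Rightarrow> 'k::zero_neq_one" where
  "unit_config h j = (\<lambda>p l. if p = h \<and> l = j then 1 else 0)"

definition supported_on :: "'a set \<Rightarrow> ('a \<Rightarrow> 'b::zero) \<Rightarrow> bool" where
  "supported_on M y \<longleftrightarrow> (\<forall>h. h \<notin> M \<longrightarrow> y h = 0)"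

lemma lin_on_add: "lin_on M f \<Longrightarrow> supported_on M x \<Longrightarrow> supported_on M y \<Longrightarrow> f (x + y) = f x + f y"
  by (simp add: lin_on_def supported_on_def)

lemma lin_on_scale:
  "lin_on M f \<Longrightarrow> supported_on M x \<Longrightarrow> f (\<lambda>h i. c * x h i) = (\<lambda>i. c * f x i)"
  unfolding lin_on_def supported_on_def by blast

lemma lin_on_zero: "lin_on M f \<Longrightarrow> f 0 = 0"
  using lin_on_scale[of M f 0 0] by (simp add: supported_on_def zero_fun_def[symmetric])

lemma lin_on_sum:
  assumes "lin_on M f" and "finite A" and "\<forall>a\<in>A. supported_on M (y a)"
  shows "f (\<Sum>a\<in>A. y a) = (\<Sum>a\<in>A. f (y a))"
  using assms(2,3)
proof (induction A rule: finite_induct)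
  case empty
  then show ?case
    using lin_on_zero[OF assms(1)] by (simp only: sum.empty)
next
  case (insert a A)
  have "supported_on M (\<Sum>a\<in>A. y a)"
    using insert.prems by (simp add: supported_on_def sum_apply)
  then have "f (y a + (\<Sum>a\<in>A. y a)) = f (y a) + f (\<Sum>a\<in>A. y a)"
    using insert.prems lin_on_add[OF assms(1)] by blast
  also have "\<dots> = f (y a) + (\<Sum>a\<in>A. f (y a))"
    using insert.IH insert.prems by simp
  finally show ?case
    by (simp only: sum.insert[OF insert.hyps])
qed

lemma lin_on_expand:
  assumes lin: "lin_on M f" and "finite M" and y: "supported_on M (y :: 'g \<Rightarrow> 'n::finite \<Rightarrow> 'k::field)"
  shows "f y i = (\<Sum>h\<in>M. \<Sum>j\<in>UNIV. y h j * f (unit_config h j) i)"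
proof -
  define e where "e = (\<lambda>(h, j) p l. y h j * unit_config h j p l)"
  have unit_supported: "supported_on M (unit_config h j :: 'g \<Rightarrow> 'n \<Rightarrow> 'k)" if "h \<in> M" for h j
    using that by (auto simp: supported_on_def unit_config_def fun_eq_iff)
  have y_eq: "y = (\<Sum>hj\<in>M \<times> UNIV. e hj)"
  proof (intro ext)
    fix p l
    have "(\<Sum>hj\<in>M \<times> UNIV. e hj) p l = (\<Sum>h\<in>M. if h = p then y h l else 0)"
      by (simp add: e_def sum_apply sum.cartesian_product[symmetric] unit_config_def if_distrib
          cong: if_cong) (auto intro!: sum.cong simp: sum.delta')
    also have "\<dots> = y p l"
      using assms(2) y by (auto simp: supported_on_def)
    finally show "y p l = (\<Sum>hj\<in>M \<times> UNIV. e hj) p l" ..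
  qed
  have "supported_on M (e hj)" if "hj \<in> M \<times> UNIV" for hj
    using that by (auto simp: e_def supported_on_def unit_config_def)
  then have "f y = (\<Sum>hj\<in>M \<times> UNIV. f (e hj))"
    unfolding y_eq using assms(2) by (intro lin_on_sum[OF lin]) auto
  also have "\<dots> = (\<Sum>(h, j)\<in>M \<times> UNIV. (\<lambda>i. y h j * f (unit_config h j) i))"
    unfolding e_def using lin_on_scale[OF lin] unit_supported by (intro sum.cong) auto
  finally show ?thesis
    by (simp add: sum_apply sum.cartesian_product[symmetric])
qed

section \<open>The kernel of a linear NUCA\<close>

(* For a kernel c of an automaton tau, c g h i j is the coefficient of x (g + h) j in (tau x) g i. *)
type_synonym ('g, 'n, 'k) kernel = "'g \<Rightarrow> 'g \<Rightarrow> 'n \<Rightarrow> 'n \<Rightarrow> 'k"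

definition kernel_of ::
    "(('g::group_add \<Rightarrow> 'n \<Rightarrow> 'k::field) \<Rightarrow> ('g \<Rightarrow> 'n \<Rightarrow> 'k)) \<Rightarrow> ('g, 'n, 'k) kernel" where
  "kernel_of \<tau> g h i j = \<tau> (unit_config (g + h) j) g i"

definition memory :: "('g, 'n, 'k::zero) kernel \<Rightarrow> 'g set" where
  "memory c = {h. \<exists>g i j. c g h i j \<noteq> 0}"

definition admissible_kernel :: "('g, 'n, 'k::zero) kernel \<Rightarrow> bool" where
  "admissible_kernel c \<longleftrightarrow> finite (memory c) \<and> (\<exists>v. \<forall>\<^sub>\<infinity>g. c g = v)"

definition kernel_op ::
    "('g::group_add, 'n::finite, 'k::field) kernel \<Rightarrow> ('g \<Rightarrow> 'n \<Rightarrow> 'k) \<Rightarrow> ('g \<Rightarrow> 'n \<Rightarrow> 'k)" where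
  "kernel_op c x g i = (\<Sum>h\<in>memory c. \<Sum>j\<in>UNIV. c g h i j * x (g + h) j)"

lemma notin_memory: "h \<notin> memory c \<Longrightarrow> c g h i j = 0"
  by (auto simp: memory_def)

lemma kernel_op_eq_sum_superset:
  assumes "finite H" and "memory c \<subseteq> H"
  shows "kernel_op c x g i = (\<Sum>h\<in>H. \<Sum>j\<in>UNIV. c g h i j * x (g + h) j)"
  unfolding kernel_op_def
  by (rule sum.mono_neutral_left) (use assms in \<open>auto simp: notin_memory\<close>)

lemma kernel_of_kernel_op:
  assumes "finite (memory c)"
  shows "kernel_of (kernel_op c) = c"
proof (intro ext)
  fix g h i j
  have "kernel_of (kernel_op c) g h i j = (\<Sum>h'\<in>memory c. if h' = h then c g h' i j else 0)"
    by (auto simp: kernel_of_def kernel_op_def unit_config_def if_distrib sum.delta'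
        intro!: sum.cong cong: if_cong)
  also have "\<dots> = c g h i j"
    using assms by (auto simp: notin_memory)
  finally show "kernel_of (kernel_op c) g h i j = c g h i j" .
qed

lemma kernel_of_nuca:
  assumes "lin_on M (s g)"
  shows "kernel_of (nuca M s) g h i j = (if h \<in> M then s g (unit_config h j) i else 0)"
proof -
  have "(\<lambda>h'. if h' \<in> M then unit_config (g + h) j (g + h') else 0) =
      (if h \<in> M then unit_config h j else (0 :: 'a \<Rightarrow> 'b \<Rightarrow> 'c))"
    by (auto simp: unit_config_def fun_eq_iff)
  then show ?thesis
    using lin_on_zero[OF assms] by (simp add: kernel_of_def nuca_def)
qed

lemma memory_kernel_of_nuca:
  assumes "\<And>g. lin_on M (s g)"
  shows "memory (kernel_of (nuca M s)) \<subseteq> M"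
  by (auto simp: memory_def kernel_of_nuca[OF assms])

lemma kernel_op_kernel_of_nuca:
  assumes "finite M" and lin: "\<And>g. lin_on M (s g)"
  shows "kernel_op (kernel_of (nuca M s)) = nuca M s"
proof (intro ext)
  fix x g i
  have "nuca M s x g i = s g (\<lambda>h. if h \<in> M then x (g + h) else 0) i"
    by (simp add: nuca_def)
  also have "\<dots> = (\<Sum>h\<in>M. \<Sum>j\<in>UNIV. (if h \<in> M then x (g + h) else 0) j * s g (unit_config h j) i)"
    by (rule lin_on_expand[OF lin assms(1)]) (auto simp: supported_on_def)
  also have "\<dots> = kernel_op (kernel_of (nuca M s)) x g i"
    unfolding kernel_op_eq_sum_superset[OF assms(1) memory_kernel_of_nuca[OF lin]]
    by (intro sum.cong refl) (simp add: kernel_of_nuca[OF lin])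
  finally show "kernel_op (kernel_of (nuca M s)) x g i = nuca M s x g i" ..
qed

lemma LNUCA_cE:
  assumes "\<tau> \<in> LNUCA_c"
  obtains M s where "finite M" "\<And>g. lin_on M (s g)" "\<exists>v. \<forall>\<^sub>\<infinity>g. s g = v" "\<tau> = nuca M s"
proof -
  from assms obtain M s E where M: "finite M" and lin: "\<And>g. lin_on M (s g)"
    and \<tau>: "\<tau> = nuca M s" and "finite E" "\<forall>g h. g \<notin> E \<longrightarrow> h \<notin> E \<longrightarrow> s g = s h"
    unfolding LNUCA_c_def by blast
  then have "\<exists>v. \<forall>\<^sub>\<infinity>g. s g = v"
    by (subst eventually_constant_iff_finite_exceptions) blast
  then show thesis
    by (rule that[OF M lin _ \<tau>])
qed

lemma LNUCA_cI:
  assumes "finite M" and "\<And>g. lin_on M (s g)" and "\<exists>v. \<forall>\<^sub>\<infinity>g. s g = v"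
  shows "nuca M s \<in> LNUCA_c"
proof -
  obtain E where "finite E" "\<forall>g h. g \<notin> E \<longrightarrow> h \<notin> E \<longrightarrow> s g = s h"
    using assms(3) eventually_constant_iff_finite_exceptions[of s] by blast
  then show ?thesis
    unfolding LNUCA_c_def using assms(1,2) by blast
qed

lemma admissible_kernel_of:
  assumes "\<tau> \<in> LNUCA_c"
  shows "admissible_kernel (kernel_of \<tau>)"
proof -
  obtain M s v where M: "finite M" and lin: "\<And>g. lin_on M (s g)" and v: "\<forall>\<^sub>\<infinity>g. s g = v"
    and \<tau>: "\<tau> = nuca M s"
    using LNUCA_cE[OF assms] by metis
  have "finite (memory (kernel_of \<tau>))"
    unfolding \<tau> using memory_kernel_of_nuca[OF lin] M by (rule finite_subset)
  moreover have "\<forall>\<^sub>\<infinity>g. kernel_of \<tau> g = (\<lambda>h i j. if h \<in> M then v (unit_config h j) i else 0)"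
    using v by (rule eventually_mono) (simp add: \<tau> kernel_of_nuca[OF lin] fun_eq_iff)
  ultimately show ?thesis
    unfolding admissible_kernel_def by blast
qed

lemma kernel_op_kernel_of:
  assumes "\<tau> \<in> LNUCA_c"
  shows "kernel_op (kernel_of \<tau>) = \<tau>"
proof -
  obtain M s where "finite M" "\<And>g. lin_on M (s g)" "\<tau> = nuca M s"
    using LNUCA_cE[OF assms] by metis
  then show ?thesis
    using kernel_op_kernel_of_nuca by blast
qed

lemma kernel_op_in_LNUCA_c:
  fixes c :: "('g::group_add, 'n::finite, 'k::field) kernel"
  assumes "admissible_kernel c"
  shows "kernel_op c \<in> LNUCA_c"
proof -
  define s where "s g y = (\<lambda>i. \<Sum>h\<in>memory c. \<Sum>j\<in>UNIV. c g h i j * y h j)"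
    for g and y :: "'g \<Rightarrow> 'n \<Rightarrow> 'k"
  have lin: "lin_on (memory c) (s g)" for g
    by (auto simp: lin_on_def s_def fun_eq_iff distrib_left sum.distrib sum_distrib_left
        mult.left_commute)
  obtain v where "\<forall>\<^sub>\<infinity>g. c g = v"
    using assms unfolding admissible_kernel_def by blast
  then have "\<forall>\<^sub>\<infinity>g. s g = (\<lambda>y i. \<Sum>h\<in>memory c. \<Sum>j\<in>UNIV. v h i j * y h j)"
    by (rule eventually_mono) (simp add: s_def fun_eq_iff)
  moreover have "finite (memory c)"
    using assms unfolding admissible_kernel_def by blast
  ultimately have "nuca (memory c) s \<in> LNUCA_c"
    using lin by (intro LNUCA_cI) auto
  moreover have "kernel_op c = nuca (memory c) s"
    by (intro ext) (simp add: kernel_op_def nuca_def s_def)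
  ultimately show ?thesis
    by simp
qed

lemma bij_betw_kernel_of: "bij_betw kernel_of LNUCA_c {c. admissible_kernel c}"
proof (rule bij_betw_byWitness[where f' = kernel_op])
  show "\<forall>c\<in>{c. admissible_kernel c}. kernel_of (kernel_op c) = c"
    by (simp add: admissible_kernel_def kernel_of_kernel_op)
qed (auto simp: kernel_op_kernel_of admissible_kernel_of kernel_op_in_LNUCA_c)

lemma kernel_of_add: "kernel_of (\<tau> + \<rho>) = kernel_of \<tau> + kernel_of \<rho>"
  by (simp add: kernel_of_def fun_eq_iff)

lemma kernel_of_id:
  "kernel_of (id :: ('g::group_add \<Rightarrow> 'n \<Rightarrow> 'k::field) \<Rightarrow> _) = (\<lambda>g h i j. if h = 0 \<and> i = j then 1 else 0)"
proof -
  have "g = g + h \<longleftrightarrow> h = 0" for g h :: 'g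
    by (metis add.right_neutral add_left_cancel)
  then show ?thesis
    by (auto simp: kernel_of_def unit_config_def fun_eq_iff)
qed

section \<open>Composition as twisted convolution of kernels\<close>

definition kernel_comp ::
    "('g::group_add, 'n::finite, 'k::field) kernel \<Rightarrow> ('g, 'n, 'k) kernel \<Rightarrow> ('g, 'n, 'k) kernel" where
  "kernel_comp c d g h i j = (\<Sum>t\<in>memory c. \<Sum>l\<in>UNIV. c g t i l * d (g + t) (- t + h) l j)"

lemma kernel_comp_eq_sum_superset:
  assumes "finite T" and "memory c \<subseteq> T"
  shows "kernel_comp c d g h i j = (\<Sum>t\<in>T. \<Sum>l\<in>UNIV. c g t i l * d (g + t) (- t + h) l j)"
  unfolding kernel_comp_def
  by (rule sum.mono_neutral_left) (use assms in \<open>auto simp: notin_memory\<close>)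

lemma memory_kernel_comp: "memory (kernel_comp c d) \<subseteq> memory c + memory d"
proof
  fix h
  assume "h \<in> memory (kernel_comp c d)"
  then obtain g i j where "kernel_comp c d g h i j \<noteq> 0"
    by (auto simp: memory_def)
  then obtain t l where t: "t \<in> memory c" and "c g t i l * d (g + t) (- t + h) l j \<noteq> 0"
    unfolding kernel_comp_def by (meson sum.not_neutral_contains_not_neutral)
  then have "- t + h \<in> memory d"
    by (auto simp: memory_def)
  then have "t + (- t + h) \<in> memory c + memory d"
    using t by blast
  then show "h \<in> memory c + memory d"
    by (simp add: add.assoc[symmetric])
qed

lemma finite_memory_kernel_comp:
  "finite (memory c) \<Longrightarrow> finite (memory d) \<Longrightarrow> finite (memory (kernel_comp c d))"
  by (meson finite_set_plus finite_subset memory_kernel_comp)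

lemma kernel_op_comp:
  assumes c: "finite (memory c)" and d: "finite (memory d)"
  shows "kernel_op c \<circ> kernel_op d = kernel_op (kernel_comp c d)"
proof (intro ext)
  fix x g i
  define P where "P = memory c + memory d"
  have P: "finite P"
    using c d by (simp add: P_def finite_set_plus)
  have shift: "kernel_op d x (g + t) l = (\<Sum>h\<in>P. \<Sum>j\<in>UNIV. d (g + t) (- t + h) l j * x (g + h) j)"
    if "t \<in> memory c" for t l
  proof -
    have "memory d \<subseteq> (\<lambda>h. - t + h) ` P"
    proof
      fix u
      assume "u \<in> memory d"
      then have "t + u \<in> P"
        using that by (auto simp: P_def)
      then show "u \<in> (\<lambda>h. - t + h) ` P"
        by (rule rev_image_eqI) (simp add: add.assoc[symmetric])
    qed
    then have "kernel_op d x (g + t) l =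
        (\<Sum>u\<in>(\<lambda>h. - t + h) ` P. \<Sum>j\<in>UNIV. d (g + t) u l j * x (g + t + u) j)"
      using P by (intro kernel_op_eq_sum_superset) auto
    also have "\<dots> = (\<Sum>h\<in>P. \<Sum>j\<in>UNIV. d (g + t) (- t + h) l j * x (g + h) j)"
      by (subst sum.reindex) (auto simp: inj_on_def add.assoc)
    finally show ?thesis .
  qed
  have "(kernel_op c \<circ> kernel_op d) x g i =
      (\<Sum>t\<in>memory c. \<Sum>l\<in>UNIV. \<Sum>h\<in>P. \<Sum>j\<in>UNIV. c g t i l * (d (g + t) (- t + h) l j * x (g + h) j))"
    by (simp add: kernel_op_def[of c] shift sum_distrib_left)
  also have "\<dots> =
      (\<Sum>h\<in>P. \<Sum>j\<in>UNIV. \<Sum>t\<in>memory c. \<Sum>l\<in>UNIV. c g t i l * (d (g + t) (- t + h) l j * x (g + h) j))"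
    by (rule sum_swap_nested)
  also have "\<dots> = (\<Sum>h\<in>P. \<Sum>j\<in>UNIV. kernel_comp c d g h i j * x (g + h) j)"
    by (simp add: kernel_comp_def sum_distrib_right mult.assoc)
  also have "\<dots> = kernel_op (kernel_comp c d) x g i"
    using P memory_kernel_comp[of c d] by (simp add: P_def kernel_op_eq_sum_superset)
  finally show "(kernel_op c \<circ> kernel_op d) x g i = kernel_op (kernel_comp c d) x g i" .
qed

lemma kernel_of_comp:
  assumes "\<tau> \<in> LNUCA_c" and "\<rho> \<in> LNUCA_c"
  shows "kernel_of (\<tau> \<circ> \<rho>) = kernel_comp (kernel_of \<tau>) (kernel_of \<rho>)"
proof -
  have fin: "finite (memory (kernel_of \<tau>))" "finite (memory (kernel_of \<rho>))"
    using admissible_kernel_of[OF assms(1)] admissible_kernel_of[OF assms(2)]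
    by (simp_all add: admissible_kernel_def)
  then have "finite (memory (kernel_comp (kernel_of \<tau>) (kernel_of \<rho>)))"
    by (rule finite_memory_kernel_comp)
  moreover have "\<tau> \<circ> \<rho> = kernel_op (kernel_comp (kernel_of \<tau>) (kernel_of \<rho>))"
    using kernel_op_comp[OF fin] kernel_op_kernel_of assms by metis
  ultimately show ?thesis
    by (simp add: kernel_of_kernel_op)
qed

section \<open>Kernels as matrices over D^1(k[G])\<close>

lemma cofinite_value_notin_memory:
  assumes "infinite (UNIV :: 'g set)" and "admissible_kernel (c :: ('g, 'n, 'k::zero) kernel)"
    and "h \<notin> memory c"
  shows "cofinite_value c h i j = 0"
proof -
  have "\<forall>\<^sub>\<infinity>g. c g = cofinite_value c"
    using assms(1,2) unfolding admissible_kernel_def by (blast intro: eventually_eq_cofinite_value)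
  then obtain g where "c g = cofinite_value c"
    using assms(1) eventually_happens' by fastforce
  then show ?thesis
    using assms(3) by (metis notin_memory)
qed

(* Entry (alpha, beta) of D^1(k[G]): alpha is the value of c at infinity and beta the finitely
   many deviations from it. *)
definition mat_of_kernel ::
    "('g, 'n, 'k::field) kernel \<Rightarrow> 'n \<Rightarrow> 'n \<Rightarrow> ('g \<Rightarrow> 'k) \<times> ('g \<Rightarrow> 'g \<Rightarrow> 'k)" where
  "mat_of_kernel c =
     (\<lambda>i j. ((\<lambda>h. cofinite_value c h i j), (\<lambda>g h. c g h i j - cofinite_value c h i j)))"

definition kernel_of_mat ::
    "('n \<Rightarrow> 'n \<Rightarrow> ('g \<Rightarrow> 'k) \<times> ('g \<Rightarrow> 'g \<Rightarrow> 'k)) \<Rightarrow> ('g, 'n, 'k::field) kernel" where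
  "kernel_of_mat A = (\<lambda>g h i j. fst (A i j) h + snd (A i j) g h)"

lemma kernel_of_mat_mat_of_kernel: "kernel_of_mat (mat_of_kernel c) = c"
  by (simp add: kernel_of_mat_def mat_of_kernel_def)

lemma eventually_kernel_of_mat:
  fixes A :: "'n::finite \<Rightarrow> 'n \<Rightarrow> ('g \<Rightarrow> 'k::field) \<times> ('g \<Rightarrow> 'g \<Rightarrow> 'k)"
  assumes "\<forall>i j. \<forall>\<^sub>\<infinity>g. snd (A i j) g = 0"
  shows "\<forall>\<^sub>\<infinity>g. kernel_of_mat A g = (\<lambda>h i j. fst (A i j) h)"
proof -
  have "\<forall>\<^sub>\<infinity>g. \<forall>i j. snd (A i j) g = 0"
    using assms by (simp add: eventually_all_finite)
  then show ?thesis
    by (rule eventually_mono) (simp add: kernel_of_mat_def fun_eq_iff)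
qed

lemma mat_of_kernel_kernel_of_mat:
  fixes A :: "'n::finite \<Rightarrow> 'n \<Rightarrow> ('g \<Rightarrow> 'k::field) \<times> ('g \<Rightarrow> 'g \<Rightarrow> 'k)"
  assumes "infinite (UNIV :: 'g set)" and "\<forall>i j. \<forall>\<^sub>\<infinity>g. snd (A i j) g = 0"
  shows "mat_of_kernel (kernel_of_mat A) = A"
proof -
  have "cofinite_value (kernel_of_mat A) = (\<lambda>h i j. fst (A i j) h)"
    by (rule cofinite_value_eq[OF assms(1) eventually_kernel_of_mat[OF assms(2)]])
  then show ?thesis
    by (simp add: mat_of_kernel_def kernel_of_mat_def fun_eq_iff prod_eq_iff)
qed

lemma MatD1_eventually_snd_eq_0: "A \<in> MatD1 \<Longrightarrow> \<forall>i j. \<forall>\<^sub>\<infinity>g. snd (A i j) g = 0"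
  by (auto simp: MatD1_def D1_def groupring2_def fin_supp_def eventually_cofinite mem_Times_iff)

lemma MatD1_supportE:
  assumes "A \<in> MatD1"
  obtains S where "finite S" "\<And>i j t. t \<notin> S \<Longrightarrow> fst (A i j) t = 0"
    "\<And>i j g t. t \<notin> S \<Longrightarrow> snd (A i j) g t = 0"
proof
  define S where "S = (\<Union>i j. {t. fst (A i j) t \<noteq> 0}) \<union>
    (\<Union>i j. \<Union>g\<in>{g. snd (A i j) g \<noteq> 0}. {t. snd (A i j) g t \<noteq> 0})"
  have "A i j \<in> D1" for i j
    using assms by (simp add: MatD1_def)
  then show "finite S"
    by (auto simp: S_def D1_def groupring_def groupring2_def fin_supp_def mem_Times_iff)
  show "fst (A i j) t = 0" if "t \<notin> S" for i j t
    using that by (auto simp: S_def)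
  show "snd (A i j) g t = 0" if "t \<notin> S" for i j g t
  proof (cases "snd (A i j) g = 0")
    case False
    then show ?thesis
      using that unfolding S_def by blast
  qed simp
qed

lemma admissible_kernel_of_mat:
  assumes "A \<in> MatD1"
  shows "admissible_kernel (kernel_of_mat A)"
proof -
  obtain S where S: "finite S" "\<And>i j t. t \<notin> S \<Longrightarrow> fst (A i j) t = 0"
    "\<And>i j g t. t \<notin> S \<Longrightarrow> snd (A i j) g t = 0"
    using MatD1_supportE[OF assms] by blast
  have "memory (kernel_of_mat A) \<subseteq> S"
    using S(2,3) by (auto simp: memory_def kernel_of_mat_def) (metis add.right_neutral)
  moreover have "\<forall>\<^sub>\<infinity>g. kernel_of_mat A g = (\<lambda>h i j. fst (A i j) h)"
    by (rule eventually_kernel_of_mat[OF MatD1_eventually_snd_eq_0[OF assms]])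
  ultimately show ?thesis
    using S(1) unfolding admissible_kernel_def by (blast intro: finite_subset)
qed

lemma mat_of_kernel_in_MatD1:
  assumes "infinite (UNIV :: 'g set)" and c: "admissible_kernel (c :: ('g::group_add, 'n::finite, 'k::field) kernel)"
  shows "mat_of_kernel c \<in> MatD1"
proof -
  have fin: "finite (memory c)"
    using c by (simp add: admissible_kernel_def)
  have "\<forall>\<^sub>\<infinity>g. c g = cofinite_value c"
    using assms(1) c unfolding admissible_kernel_def by (blast intro: eventually_eq_cofinite_value)
  then have fin_exc: "finite {g. c g \<noteq> cofinite_value c}"
    by (simp add: eventually_cofinite)
  have "mat_of_kernel c i j \<in> D1" for i j
  proof -
    have "{h. cofinite_value c h i j \<noteq> 0} \<subseteq> memory c"
      using cofinite_value_notin_memory[OF assms] by blast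
    moreover have "{h. c g h i j - cofinite_value c h i j \<noteq> 0} \<subseteq> memory c" for g
      using cofinite_value_notin_memory[OF assms] notin_memory by fastforce
    moreover have "{g. (\<lambda>h. c g h i j - cofinite_value c h i j) \<noteq> 0} \<subseteq> {g. c g \<noteq> cofinite_value c}"
      by (auto simp: fun_eq_iff)
    ultimately show ?thesis
      using fin fin_exc
      by (auto simp: D1_def groupring_def groupring2_def fin_supp_def mat_of_kernel_def
          intro: finite_subset)
  qed
  then show ?thesis
    by (simp add: MatD1_def)
qed

lemma bij_betw_mat_of_kernel:
  assumes "infinite (UNIV :: 'g::group_add set)"
  shows "bij_betw mat_of_kernel {c :: ('g, 'n::finite, 'k::field) kernel. admissible_kernel c} MatD1"
proof (rule bij_betw_byWitness[where f' = kernel_of_mat])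
qed (auto simp: kernel_of_mat_mat_of_kernel mat_of_kernel_in_MatD1[OF assms] admissible_kernel_of_mat
    mat_of_kernel_kernel_of_mat[OF assms] MatD1_eventually_snd_eq_0)

lemma fst_d1_mul_eq_sum:
  assumes "finite S" and "\<And>t. t \<notin> S \<Longrightarrow> fst x t = 0"
  shows "fst (d1_mul x y) h = (\<Sum>t\<in>S. fst x t * fst y (- t + h))"
  using Sum_any_mult_eq_sum[of S "fst x", OF assms] by (simp add: d1_mul_def gr_mul_def prod.case_eq_if)

lemma snd_d1_mul_eq_sum:
  assumes "finite S" and "\<And>t. t \<notin> S \<Longrightarrow> fst x t = 0" and "\<And>t. t \<notin> S \<Longrightarrow> snd x g t = 0"
  shows "snd (d1_mul x y) g h =
    (\<Sum>t\<in>S. fst x t * snd y (g + t) (- t + h) + snd x g t * fst y (- t + h)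
      + snd x g t * snd y (g + t) (- t + h))"
  using Sum_any_mult_eq_sum[of S "fst x", OF assms(1,2)] Sum_any_mult_eq_sum[of S "snd x g", OF assms(1,3)]
  by (simp add: d1_mul_def tw_lr_def tw_rl_def tw_rr_def sum.distrib prod.case_eq_if)

lemma kernel_comp_kernel_of_mat:
  fixes A B :: "'n::finite \<Rightarrow> 'n \<Rightarrow> ('g::group_add \<Rightarrow> 'k::field) \<times> ('g \<Rightarrow> 'g \<Rightarrow> 'k)"
  assumes S: "finite S" and fst_A: "\<And>i j t. t \<notin> S \<Longrightarrow> fst (A i j) t = 0"
    and snd_A: "\<And>i j g t. t \<notin> S \<Longrightarrow> snd (A i j) g t = 0"
  shows "kernel_comp (kernel_of_mat A) (kernel_of_mat B) = kernel_of_mat (mat_mul A B)"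
proof (intro ext)
  fix g h i j
  have entry: "fst (d1_mul (A i l) (B l j)) h + snd (d1_mul (A i l) (B l j)) g h =
      (\<Sum>t\<in>S. (fst (A i l) t + snd (A i l) g t) * (fst (B l j) (- t + h) + snd (B l j) (g + t) (- t + h)))"
    for l
    using fst_d1_mul_eq_sum[of S "A i l", OF S fst_A] snd_d1_mul_eq_sum[of S "A i l", OF S fst_A snd_A]
    by (simp add: sum.distrib[symmetric] algebra_simps)
  have "memory (kernel_of_mat A) \<subseteq> S"
    using fst_A snd_A by (auto simp: memory_def kernel_of_mat_def) (metis add.right_neutral)
  then have "kernel_comp (kernel_of_mat A) (kernel_of_mat B) g h i j =
      (\<Sum>t\<in>S. \<Sum>l\<in>UNIV. kernel_of_mat A g t i l * kernel_of_mat B (g + t) (- t + h) l j)"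
    by (rule kernel_comp_eq_sum_superset[OF S])
  also have "\<dots> = (\<Sum>l\<in>UNIV. \<Sum>t\<in>S. (fst (A i l) t + snd (A i l) g t)
      * (fst (B l j) (- t + h) + snd (B l j) (g + t) (- t + h)))"
    unfolding kernel_of_mat_def by (rule sum.swap)
  also have "\<dots> = (\<Sum>l\<in>UNIV. fst (d1_mul (A i l) (B l j)) h + snd (d1_mul (A i l) (B l j)) g h)"
    by (simp only: entry)
  also have "\<dots> = kernel_of_mat (mat_mul A B) g h i j"
    by (simp add: kernel_of_mat_def mat_mul_def fst_sum snd_sum sum_apply sum.distrib)
  finally show "kernel_comp (kernel_of_mat A) (kernel_of_mat B) g h i j =
      kernel_of_mat (mat_mul A B) g h i j" .
qed

lemma eventually_snd_mat_mul_eq_0: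
  fixes A B :: "'n::finite \<Rightarrow> 'n \<Rightarrow> ('g::group_add \<Rightarrow> 'k::field) \<times> ('g \<Rightarrow> 'g \<Rightarrow> 'k)"
  assumes S: "finite S" and fst_A: "\<And>i j t. t \<notin> S \<Longrightarrow> fst (A i j) t = 0"
    and snd_A: "\<And>i j g t. t \<notin> S \<Longrightarrow> snd (A i j) g t = 0"
    and "\<forall>i j. \<forall>\<^sub>\<infinity>g. snd (A i j) g = 0" and "\<forall>i j. \<forall>\<^sub>\<infinity>g. snd (B i j) g = 0"
  shows "\<forall>i j. \<forall>\<^sub>\<infinity>g. snd (mat_mul A B i j) g = 0"
proof (intro allI)
  fix i j
  have B: "\<forall>\<^sub>\<infinity>g. \<forall>l. snd (B l j) g = 0"
    using assms(5) by (simp add: eventually_all_finite)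
  have "\<forall>\<^sub>\<infinity>g. \<forall>l. snd (A i l) g = 0"
    using assms(4) by (simp add: eventually_all_finite)
  moreover have "\<forall>\<^sub>\<infinity>g. \<forall>t\<in>S. \<forall>l. snd (B l j) (g + t) = 0"
    using S eventually_cofinite_translate[OF B] by (simp add: eventually_ball_finite)
  ultimately have "\<forall>\<^sub>\<infinity>g. (\<forall>l. snd (A i l) g = 0) \<and> (\<forall>t\<in>S. \<forall>l. snd (B l j) (g + t) = 0)"
    by (rule eventually_conj)
  then show "\<forall>\<^sub>\<infinity>g. snd (mat_mul A B i j) g = 0"
    by (rule eventually_mono)
      (simp add: fun_eq_iff mat_mul_def snd_sum sum_apply snd_d1_mul_eq_sum[OF S fst_A snd_A])
qed

lemma mat_of_kernel_comp:
  assumes inf: "infinite (UNIV :: 'g set)"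
    and c: "admissible_kernel (c :: ('g::group_add, 'n::finite, 'k::field) kernel)"
    and d: "admissible_kernel d"
  shows "mat_of_kernel (kernel_comp c d) = mat_mul (mat_of_kernel c) (mat_of_kernel d)"
proof -
  have A: "mat_of_kernel c \<in> MatD1" and B: "mat_of_kernel d \<in> MatD1"
    using mat_of_kernel_in_MatD1[OF inf] c d by blast+
  obtain S where S: "finite S" "\<And>i j t. t \<notin> S \<Longrightarrow> fst (mat_of_kernel c i j) t = 0"
    "\<And>i j g t. t \<notin> S \<Longrightarrow> snd (mat_of_kernel c i j) g t = 0"
    using MatD1_supportE[OF A] by blast
  have "kernel_comp c d = kernel_of_mat (mat_mul (mat_of_kernel c) (mat_of_kernel d))"
    using kernel_comp_kernel_of_mat[of S "mat_of_kernel c" "mat_of_kernel d", OF S]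
    by (simp add: kernel_of_mat_mat_of_kernel)
  moreover have "\<forall>i j. \<forall>\<^sub>\<infinity>g. snd (mat_mul (mat_of_kernel c) (mat_of_kernel d) i j) g = 0"
    by (rule eventually_snd_mat_mul_eq_0[OF S MatD1_eventually_snd_eq_0[OF A]
          MatD1_eventually_snd_eq_0[OF B]])
  ultimately show ?thesis
    by (simp add: mat_of_kernel_kernel_of_mat[OF inf])
qed

lemma mat_of_kernel_add:
  assumes inf: "infinite (UNIV :: 'g set)"
    and "admissible_kernel (c :: ('g, 'n, 'k::field) kernel)" and "admissible_kernel d"
  shows "mat_of_kernel (c + d) = mat_of_kernel c + mat_of_kernel d"
proof -
  have "\<forall>\<^sub>\<infinity>g. c g = cofinite_value c" "\<forall>\<^sub>\<infinity>g. d g = cofinite_value d"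
    using assms unfolding admissible_kernel_def by (blast intro: eventually_eq_cofinite_value)+
  then have "\<forall>\<^sub>\<infinity>g. (c + d) g = cofinite_value c + cofinite_value d"
    by (rule eventually_elim2) simp
  then have "cofinite_value (c + d) = cofinite_value c + cofinite_value d"
    by (rule cofinite_value_eq[OF inf])
  then show ?thesis
    by (simp add: mat_of_kernel_def fun_eq_iff)
qed

lemma mat_of_kernel_id:
  assumes "infinite (UNIV :: 'g::group_add set)"
  shows "mat_of_kernel (\<lambda>(g :: 'g) h (i :: 'n::finite) j. if h = 0 \<and> i = j then 1 else (0 :: 'k::field))
    = mat_one"
proof -
  have cv: "cofinite_value (\<lambda>(g :: 'g) h (i :: 'n) j. if h = 0 \<and> i = j then 1 else (0 :: 'k)) =
      (\<lambda>h i j. if h = 0 \<and> i = j then 1 else 0)"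
    by (rule cofinite_value_eq[OF assms]) simp
  show ?thesis
    unfolding mat_of_kernel_def cv by (simp add: mat_one_def d1_one_def fun_eq_iff zero_prod_def)
qed

theorem theoremA:
  assumes "infinite (UNIV :: 'g::group_add set)"
  shows "\<exists>\<Phi>. bij_betw \<Phi> (LNUCA_c :: (('g \<Rightarrow> 'n::finite \<Rightarrow> 'k::field) \<Rightarrow> ('g \<Rightarrow> 'n \<Rightarrow> 'k)) set)
                       (MatD1 :: ('n \<Rightarrow> 'n \<Rightarrow> ('g \<Rightarrow> 'k) \<times> ('g \<Rightarrow> 'g \<Rightarrow> 'k)) set)
          \<and> (\<forall>\<tau>\<in>LNUCA_c. \<forall>\<rho>\<in>LNUCA_c.
                \<Phi> (\<tau> + \<rho>) = \<Phi> \<tau> + \<Phi> \<rho> \<and> \<Phi> (\<tau> \<circ> \<rho>) = mat_mul (\<Phi> \<tau>) (\<Phi> \<rho>))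
          \<and> \<Phi> id = mat_one"
proof -
  define \<Phi> :: "(('g \<Rightarrow> 'n \<Rightarrow> 'k) \<Rightarrow> ('g \<Rightarrow> 'n \<Rightarrow> 'k)) \<Rightarrow> 'n \<Rightarrow> 'n \<Rightarrow> ('g \<Rightarrow> 'k) \<times> ('g \<Rightarrow> 'g \<Rightarrow> 'k)"
    where "\<Phi> \<tau> = mat_of_kernel (kernel_of \<tau>)" for \<tau>
  have "bij_betw \<Phi> LNUCA_c MatD1"
    using bij_betw_trans[OF bij_betw_kernel_of bij_betw_mat_of_kernel[OF assms]]
    by (simp add: comp_def \<Phi>_def[abs_def])
  moreover have "\<Phi> (\<tau> + \<rho>) = \<Phi> \<tau> + \<Phi> \<rho> \<and> \<Phi> (\<tau> \<circ> \<rho>) = mat_mul (\<Phi> \<tau>) (\<Phi> \<rho>)"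
    if "\<tau> \<in> LNUCA_c" and "\<rho> \<in> LNUCA_c" for \<tau> \<rho>
    using that admissible_kernel_of[OF that(1)] admissible_kernel_of[OF that(2)]
    by (simp add: \<Phi>_def kernel_of_add mat_of_kernel_add[OF assms] kernel_of_comp
        mat_of_kernel_comp[OF assms])
  moreover have "\<Phi> id = mat_one"
    unfolding \<Phi>_def kernel_of_id by (rule mat_of_kernel_id[OF assms])
  ultimately show ?thesis
    by blast
qed


end
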